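(* Let $x\in\{0,1\}^*$ and let $Y\subseteq\{0,1\}^*$ be a finite nonempty set of words with $x\notin Y$. Then there is a $2^{|Y|}$-state AfA that accepts $x$ with probability $1$ and accepts every word of $Y$ with probability $0$.
   Context: An $n$-state affine finite automaton (AfA) over a finite alphabet $\Sigma$ consists of real $n\times n$ matrices $A_\sigma$ for $\sigma\in\Sigma\cup\{\$\}$ ($\$$ a right end-marker), each of whose columns sums to $1$; an initial vector $v_0\in\mathbb{R}^n$ with entries summing to $1$; and a set $E_a$ of accepting states. On input $w=w_1\cdots w_k$ the final vector is $v_f=A_\$A_{w_k}\cdots A_{w_1}v_0$, and $w$ is accepted with probability $\sum_{j\in E_a}|v_f[j]|\big/\sum_{j=1}^n|v_f[j]|$. *)

theory Defs
  imports Complex_Main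
begin

text \<open>Binary alphabet {0,1} rendered as bool (False = 0, True = 1).
  Tape symbols: Some a for a letter a, None for the right end-marker.
  States are 0..n-1; an n x n real matrix is a function nat => nat => real
  (row index first), only entries with indices < n matter.\<close>

type_synonym matrix = "nat \<Rightarrow> nat \<Rightarrow> real"
type_synonym vec = "nat \<Rightarrow> real"

definition mat_vec :: "nat \<Rightarrow> matrix \<Rightarrow> vec \<Rightarrow> vec" where
  "mat_vec n M v = (\<lambda>i. \<Sum>j<n. M i j * v j)"

definition is_AfA :: "nat \<Rightarrow> (bool option \<Rightarrow> matrix) \<Rightarrow> vec \<Rightarrow> nat set \<Rightarrow> bool" where
  "is_AfA n A v0 E \<longleftrightarrow>
     (\<forall>s. \<forall>j<n. (\<Sum>i<n. A s i j) = 1) \<and>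
     (\<Sum>i<n. v0 i) = 1 \<and>
     E \<subseteq> {..<n}"

definition final_vec :: "nat \<Rightarrow> (bool option \<Rightarrow> matrix) \<Rightarrow> vec \<Rightarrow> bool list \<Rightarrow> vec" where
  "final_vec n A v0 w =
     mat_vec n (A None) (foldl (\<lambda>v a. mat_vec n (A (Some a)) v) v0 w)"

definition acc_prob :: "nat \<Rightarrow> (bool option \<Rightarrow> matrix) \<Rightarrow> vec \<Rightarrow> nat set \<Rightarrow> bool list \<Rightarrow> real" where
  "acc_prob n A v0 E w =
     (let vf = final_vec n A v0 w in (\<Sum>j\<in>E. \<bar>vf j\<bar>) / (\<Sum>j<n. \<bar>vf j\<bar>))"

end

theory Submission
  imports Defs "HOL-Computational_Algebra.Polynomial"
begin

text \<open>Code words injectively by naturals \<open>c\<close> such that appending a letter acts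
  affinely, \<open>c(wa) = 3 c(w) + d(a)\<close>. List \<open>x, y\<^sub>1, \<dots>, y\<^sub>m\<close> and let
  \<open>L\<^sub>0, \<dots>, L\<^sub>m\<close> be the Lagrange basis at their codes. Since \<open>L\<^sub>i(3z + d)\<close> has
  degree at most \<open>m\<close>, it equals \<open>\<Sum>\<^sub>j L\<^sub>i(3t\<^sub>j + d) L\<^sub>j(z)\<close>; so the vector
  \<open>(L\<^sub>i(c(w)))\<^sub>i\<close> is updated linearly letter by letter, by matrices whose columns
  sum to 1 because \<open>\<Sum>\<^sub>i L\<^sub>i = 1\<close>. On the \<open>k\<close>-th listed word this vector is the
  \<open>k\<close>-th unit vector, so accepting in state 0 separates \<open>x\<close> from \<open>Y\<close>, and
  \<open>m + 1 \<le> 2\<^sup>m\<close> states are enough.\<close>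

definition lagrange_basis :: "(nat \<Rightarrow> 'a::field) \<Rightarrow> nat \<Rightarrow> nat \<Rightarrow> 'a poly" where
  "lagrange_basis t N i = (\<Prod>j\<in>{..<N}-{i}. smult (inverse (t i - t j)) [:- t j, 1:])"

lemma degree_lagrange_basis_less:
  assumes "i < N"
  shows "degree (lagrange_basis t N i) < N"
proof -
  have "degree (lagrange_basis t N i)
          \<le> (\<Sum>j\<in>{..<N}-{i}. degree (smult (inverse (t i - t j)) [:- t j, 1:]))"
    unfolding lagrange_basis_def by (rule order_trans[OF degree_prod_sum_le]) (simp_all add: o_def)
  also have "\<dots> \<le> (\<Sum>j\<in>{..<N}-{i}. 1)"
    by (intro sum_mono order_trans[OF degree_smult_le]) simp
  also have "\<dots> = N - 1" using assms by simp
  finally show ?thesis using assms by linarith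
qed

lemma poly_lagrange_basis:
  "poly (lagrange_basis t N i) z = (\<Prod>j\<in>{..<N}-{i}. (z - t j) / (t i - t j))"
  unfolding lagrange_basis_def poly_prod by (simp add: divide_inverse algebra_simps)

lemma poly_lagrange_basis_node:
  assumes "inj_on t {..<N}" "i < N" "k < N"
  shows "poly (lagrange_basis t N i) (t k) = of_bool (i = k)"
proof (cases "i = k")
  case True
  have "t i \<noteq> t j" if "j \<in> {..<N}-{i}" for j
    using assms that unfolding inj_on_def by blast
  then show ?thesis using True by (simp add: poly_lagrange_basis)
next
  case False
  then have "k \<in> {..<N}-{i}" using assms(3) by simp
  then show ?thesis using False by (simp add: poly_lagrange_basis prod_zero_iff) blast
qed

lemma lagrange_interpolation:
  assumes inj: "inj_on t {..<N}" and deg: "degree q < N"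
  shows "(\<Sum>j<N. smult (poly q (t j)) (lagrange_basis t N j)) = q" (is "?p = q")
proof (rule poly_eqI_degree[where A = "t ` {..<N}"])
  fix x assume "x \<in> t ` {..<N}"
  then obtain k where k: "k < N" "x = t k" by auto
  have "poly ?p x = (\<Sum>j<N. poly q (t j) * of_bool (j = k))"
    using poly_lagrange_basis_node[OF inj _ k(1)] by (simp add: poly_sum k(2))
  also have "\<dots> = poly q x" using k by simp
  finally show "poly ?p x = poly q x" .
next
  have card: "card (t ` {..<N}) = N" using inj by (simp add: card_image)
  have "degree ?p < N"
    using deg by (intro degree_sum_less order.strict_trans1[OF degree_smult_le]
        degree_lagrange_basis_less) auto
  then show "degree ?p < card (t ` {..<N})" "degree q < card (t ` {..<N})"
    using card deg by simp_all
qed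

lemma sum_lagrange_basis:
  assumes "inj_on t {..<N}" "0 < N"
  shows "(\<Sum>j<N. poly (lagrange_basis t N j) z) = 1"
  using arg_cong[OF lagrange_interpolation[OF assms(1), of 1], of "\<lambda>p. poly p z"] assms(2)
  by (simp add: poly_sum)

lemma lagrange_basis_affine:
  assumes inj: "inj_on t {..<N}" and "i < N"
  shows "(\<Sum>j<N. poly (lagrange_basis t N i) (a * t j + b) * poly (lagrange_basis t N j) z)
           = poly (lagrange_basis t N i) (a * z + b)"
proof -
  define q where "q = pcompose (lagrange_basis t N i) [:b, a:]"
  have "degree q \<le> degree (lagrange_basis t N i)"
    using degree_pcompose_le[of "lagrange_basis t N i" "[:b, a:]"] unfolding q_def
    by (cases "a = 0") auto
  then have "degree q < N" using degree_lagrange_basis_less[OF \<open>i < N\<close>, of t] by linarith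
  from arg_cong[OF lagrange_interpolation[OF inj this], of "\<lambda>p. poly p z"] show ?thesis
    by (simp add: q_def poly_sum poly_pcompose algebra_simps)
qed

lemma sum_lessThan_vanishing_tail:
  fixes f :: "nat \<Rightarrow> 'a::comm_monoid_add"
  assumes "N \<le> n" "\<And>j. N \<le> j \<Longrightarrow> f j = 0"
  shows "(\<Sum>j<n. f j) = (\<Sum>j<N. f j)"
  using assms by (intro sum.mono_neutral_right) auto

definition lagrange_vec :: "(nat \<Rightarrow> real) \<Rightarrow> nat \<Rightarrow> real \<Rightarrow> vec" where
  "lagrange_vec t N z i = (if i < N then poly (lagrange_basis t N i) z else 0)"

text \<open>Columns \<open>j \<ge> N\<close> act on states that are never occupied; they send
  everything to state 0 only so that every column sums to 1.\<close>
definition affine_step_matrix :: "(nat \<Rightarrow> real) \<Rightarrow> nat \<Rightarrow> real \<Rightarrow> real \<Rightarrow> matrix" where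
  "affine_step_matrix t N a b i j =
     (if j < N then (if i < N then poly (lagrange_basis t N i) (a * t j + b) else 0)
      else of_bool (i = 0))"

lemma sum_lagrange_vec:
  assumes "inj_on t {..<N}" "0 < N" "N \<le> n"
  shows "(\<Sum>i<n. lagrange_vec t N z i) = 1"
  using assms by (simp add: sum_lessThan_vanishing_tail lagrange_vec_def sum_lagrange_basis)

lemma lagrange_vec_node:
  assumes "inj_on t {..<N}" "k < N"
  shows "lagrange_vec t N (t k) = (\<lambda>i. of_bool (i = k))"
  using assms by (auto simp: lagrange_vec_def poly_lagrange_basis_node)

lemma column_sum_affine_step_matrix:
  assumes "inj_on t {..<N}" "0 < N" "N \<le> n" "j < n"
  shows "(\<Sum>i<n. affine_step_matrix t N a b i j) = 1"
proof (cases "j < N")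
  case True
  then show ?thesis using assms
    by (simp add: sum_lessThan_vanishing_tail affine_step_matrix_def sum_lagrange_basis)
next
  case False
  then show ?thesis using assms by (simp add: affine_step_matrix_def)
qed

lemma mat_vec_affine_step_matrix:
  assumes inj: "inj_on t {..<N}" and "N \<le> n"
  shows "mat_vec n (affine_step_matrix t N a b) (lagrange_vec t N z) = lagrange_vec t N (a * z + b)"
proof
  fix i
  have "mat_vec n (affine_step_matrix t N a b) (lagrange_vec t N z) i
          = (\<Sum>j<N. affine_step_matrix t N a b i j * lagrange_vec t N z j)"
    unfolding mat_vec_def using \<open>N \<le> n\<close>
    by (rule sum_lessThan_vanishing_tail) (simp add: lagrange_vec_def)
  also have "\<dots> = lagrange_vec t N (a * z + b) i"
    using lagrange_basis_affine[OF inj]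
    by (simp add: affine_step_matrix_def lagrange_vec_def)
  finally show "mat_vec n (affine_step_matrix t N a b) (lagrange_vec t N z) i
                  = lagrange_vec t N (a * z + b) i" .
qed

lemma mat_vec_identity:
  assumes "\<And>i. n \<le> i \<Longrightarrow> v i = 0"
  shows "mat_vec n (\<lambda>i j. of_bool (i = j)) v = v"
proof
  fix i
  have "mat_vec n (\<lambda>i j. of_bool (i = j)) v i = (\<Sum>j<n. if i = j then v j else 0)"
    unfolding mat_vec_def by (intro sum.cong) auto
  also have "\<dots> = v i" using assms by (simp add: sum.delta)
  finally show "mat_vec n (\<lambda>i j. of_bool (i = j)) v i = v i" .
qed

text \<open>Bijective base-3 numeral with digits 1 and 2, hence injective.\<close>
definition word_code :: "bool list \<Rightarrow> nat" where
  "word_code w = foldl (\<lambda>c a. 3 * c + (if a then 2 else 1)) 0 w"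

lemma word_code_Nil [simp]: "word_code [] = 0"
  by (simp add: word_code_def)

lemma word_code_snoc [simp]: "word_code (w @ [a]) = 3 * word_code w + (if a then 2 else 1)"
  by (simp add: word_code_def)

lemma inj_word_code: "inj word_code"
proof (rule injI)
  show "word_code w = word_code v \<Longrightarrow> w = v" for w v
  proof (induction w arbitrary: v rule: rev_induct)
    case Nil
    then show ?case by (cases v rule: rev_exhaust) (auto split: if_splits)
  next
    case (snoc a w)
    then obtain v' b where v: "v = v' @ [b]" by (cases v rule: rev_exhaust) (auto split: if_splits)
    with snoc.prems have eq:
      "3 * word_code w + (if a then 2 else 1) = 3 * word_code v' + (if b then 2 else (1::nat))"
      by simp
    then have "a = b" by (cases a; cases b) presburger+
    with eq have "w = v'" using snoc.IH by simp
    with v \<open>a = b\<close> show ?case by simp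
  qed
qed

definition word_nodes :: "bool list list \<Rightarrow> nat \<Rightarrow> real" where
  "word_nodes ws k = real (word_code (ws ! k))"

definition interpolating_AfA :: "bool list list \<Rightarrow> bool option \<Rightarrow> matrix" where
  "interpolating_AfA ws s = (case s of
      None \<Rightarrow> (\<lambda>i j. of_bool (i = j))
    | Some a \<Rightarrow> affine_step_matrix (word_nodes ws) (length ws) 3 (if a then 2 else 1))"

definition interpolating_init :: "bool list list \<Rightarrow> vec" where
  "interpolating_init ws = lagrange_vec (word_nodes ws) (length ws) 0"

lemma inj_on_word_nodes:
  assumes "distinct ws"
  shows "inj_on (word_nodes ws) {..<length ws}"
proof (rule inj_onI)
  fix i j assume "i \<in> {..<length ws}" "j \<in> {..<length ws}" "word_nodes ws i = word_nodes ws j"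
  then show "i = j"
    using assms inj_word_code by (auto simp: word_nodes_def inj_eq nth_eq_iff_index_eq)
qed

lemma final_vec_interpolating_AfA:
  assumes "distinct ws" "length ws \<le> n"
  shows "final_vec n (interpolating_AfA ws) (interpolating_init ws) w
           = lagrange_vec (word_nodes ws) (length ws) (word_code w)"
proof -
  let ?v = "lagrange_vec (word_nodes ws) (length ws)"
  have run: "foldl (\<lambda>v a. mat_vec n (interpolating_AfA ws (Some a)) v) (interpolating_init ws) w
               = ?v (word_code w)"
  proof (induction w rule: rev_induct)
    case (snoc a w)
    then show ?case
      using mat_vec_affine_step_matrix[OF inj_on_word_nodes[OF assms(1)] assms(2)]
      by (simp add: interpolating_AfA_def algebra_simps)
  qed (simp add: interpolating_init_def)
  have "\<And>i. n \<le> i \<Longrightarrow> ?v (word_code w) i = 0"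
    using assms(2) by (simp add: lagrange_vec_def)
  then show ?thesis
    unfolding final_vec_def run by (simp add: interpolating_AfA_def mat_vec_identity)
qed

lemma final_vec_interpolating_AfA_nth:
  assumes "distinct ws" "length ws \<le> n" "k < length ws"
  shows "final_vec n (interpolating_AfA ws) (interpolating_init ws) (ws ! k)
           = (\<lambda>i. of_bool (i = k))"
  using lagrange_vec_node[OF inj_on_word_nodes[OF assms(1)] assms(3)] assms
  by (simp add: final_vec_interpolating_AfA word_nodes_def)

lemma is_AfA_interpolating_AfA:
  assumes "distinct ws" "ws \<noteq> []" "length ws \<le> n" "E \<subseteq> {..<n}"
  shows "is_AfA n (interpolating_AfA ws) (interpolating_init ws) E"
proof -
  have inj: "inj_on (word_nodes ws) {..<length ws}" and N: "0 < length ws"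
    using assms inj_on_word_nodes by auto
  have "(\<Sum>i<n. interpolating_AfA ws s i j) = 1" if "j < n" for s j
    using that column_sum_affine_step_matrix[OF inj N assms(3)]
    by (cases s) (simp_all add: interpolating_AfA_def)
  moreover have "(\<Sum>i<n. interpolating_init ws i) = 1"
    unfolding interpolating_init_def using inj N assms(3) by (rule sum_lagrange_vec)
  ultimately show ?thesis using assms(4) by (simp add: is_AfA_def)
qed

lemma acc_prob_unit_vec:
  assumes "final_vec n A v0 w = (\<lambda>i. of_bool (i = k))" "k < n"
  shows "acc_prob n A v0 {k} w = 1"
  using assms by (simp add: acc_prob_def of_bool_def sum.delta)

lemma acc_prob_eq_0:
  assumes "\<And>j. j \<in> E \<Longrightarrow> final_vec n A v0 w j = 0"
  shows "acc_prob n A v0 E w = 0"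
  using assms by (simp add: acc_prob_def)

theorem mainTheorem12:
  fixes x :: "bool list" and Y :: "bool list set"
  assumes "finite Y" and "Y \<noteq> {}" and "x \<notin> Y"
  shows "\<exists>A v0 E. is_AfA (2 ^ card Y) A v0 E \<and>
           acc_prob (2 ^ card Y) A v0 E x = 1 \<and>
           (\<forall>y\<in>Y. acc_prob (2 ^ card Y) A v0 E y = 0)"
proof -
  obtain ys where ys: "set ys = Y" "distinct ys"
    using finite_distinct_list[OF assms(1)] by blast
  define ws where "ws = x # ys"
  have ws: "distinct ws" "ws \<noteq> []" using ys assms(3) by (simp_all add: ws_def)
  have "length ws = Suc (card Y)" using ys distinct_card by (fastforce simp: ws_def)
  also have "\<dots> \<le> 2 ^ card Y" using less_exp by (rule Suc_leI)
  finally have len: "length ws \<le> 2 ^ card Y" .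
  let ?A = "interpolating_AfA ws" and ?v0 = "interpolating_init ws"
  have "is_AfA (2 ^ card Y) ?A ?v0 {0}"
    using ws len by (intro is_AfA_interpolating_AfA) auto
  moreover have "acc_prob (2 ^ card Y) ?A ?v0 {0} x = 1"
    using final_vec_interpolating_AfA_nth[OF ws(1) len, of 0]
    by (intro acc_prob_unit_vec) (simp_all add: ws_def)
  moreover have "acc_prob (2 ^ card Y) ?A ?v0 {0} y = 0" if y: "y \<in> Y" for y
  proof -
    obtain k where "k < length ys" "y = ys ! k"
      using y by (auto simp: ys(1)[symmetric] in_set_conv_nth)
    then have "final_vec (2 ^ card Y) ?A ?v0 y = (\<lambda>i. of_bool (i = Suc k))"
      using final_vec_interpolating_AfA_nth[OF ws(1) len, of "Suc k"] by (simp add: ws_def)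
    then show ?thesis by (intro acc_prob_eq_0) simp
  qed
  ultimately show ?thesis by blast
qed

end
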